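(* Let $\Gamma$ be a connected, undirected graph without loops on $n$ nodes with Laplacian $\mathbf L=\mathbf K-\mathbf A$, and let $\phi_1,\dots,\phi_n$ be an orthonormal basis of eigenvectors of $\mathbf L$ with $\mathbf L\phi_i=\mu_i\phi_i$. Let $$\mathbf G=\begin{bmatrix}\mathbf 0&\mathbf I\\-\mathbf I&-\mathbf L\end{bmatrix},\qquad \mathbf P=(\mathbf G^T\mathbf G)^{1/2}$$ (the positive definite square root). Then the eigenvalues of $\mathbf P$ are the $n$ pairs of reciprocal values $$\lambda_i^{P\pm}=\tfrac12\Big[\sqrt{\mu_i^2+4}\pm\mu_i\Big],\quad i=1,\dots,n,$$ with corresponding normalized eigenvectors $$\psi_i^{P\pm}=\frac{1}{\sqrt{1+(\lambda_i^{P\pm})^2}}\begin{bmatrix}\phi_i\\ \pm\lambda_i^{P\pm}\phi_i\end{bmatrix}.$$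
   Context: $\mathbf A$ is the adjacency matrix, $\mathbf K$ the diagonal degree matrix, $\mathbf I,\mathbf 0$ the $n\times n$ identity and zero matrices. *)

theory Defs
  imports "HOL-Analysis.Analysis"
begin

definition simple_adj :: "real^'n^'n \<Rightarrow> bool" where
  "simple_adj A \<longleftrightarrow> (\<forall>i j. A$i$j = A$j$i) \<and> (\<forall>i j. A$i$j = 0 \<or> A$i$j = 1) \<and> (\<forall>i. A$i$i = 0)"

definition adj_connected :: "real^'n^'n \<Rightarrow> bool" where
  "adj_connected A \<longleftrightarrow> (\<forall>u v. (\<lambda>a b. A$a$b = 1)\<^sup>*\<^sup>* u v)"

definition degree_mat :: "real^'n^'n \<Rightarrow> real^'n^'n" where
  "degree_mat A = (\<chi> i j. if i = j then (\<Sum>k\<in>UNIV. A$i$k) else 0)"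

definition laplacian :: "real^'n^'n \<Rightarrow> real^'n^'n" where
  "laplacian A = degree_mat A - A"

text \<open>The 2n x 2n block matrix G = [[0, I], [-I, -L]], indexed by 'n + 'n
  (Inl = first block, Inr = second block).\<close>
definition Gmat :: "real^'n^'n \<Rightarrow> real^('n+'n)^('n+'n)" where
  "Gmat L = (\<chi> r c. case (r, c) of
      (Inl i, Inl j) \<Rightarrow> 0
    | (Inl i, Inr j) \<Rightarrow> (if i = j then 1 else 0)
    | (Inr i, Inl j) \<Rightarrow> (if i = j then -1 else 0)
    | (Inr i, Inr j) \<Rightarrow> - L$i$j)"

definition pos_def_mat :: "real^'m^'m \<Rightarrow> bool" where
  "pos_def_mat P \<longleftrightarrow> transpose P = P \<and> (\<forall>x. x \<noteq> 0 \<longrightarrow> x \<bullet> (P *v x) > 0)"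

definition sgn_pm :: "bool \<Rightarrow> real" where
  "sgn_pm s = (if s then 1 else -1)"

definition lamP :: "bool \<Rightarrow> real \<Rightarrow> real" where
  "lamP s \<mu> = (sqrt (\<mu>\<^sup>2 + 4) + sgn_pm s * \<mu>) / 2"

definition psiP :: "bool \<Rightarrow> real \<Rightarrow> real^'n \<Rightarrow> real^('n+'n)" where
  "psiP s \<mu> \<phi> = (1 / sqrt (1 + (lamP s \<mu>)\<^sup>2)) *\<^sub>R
     (\<chi> k. case k of Inl j \<Rightarrow> \<phi>$j | Inr j \<Rightarrow> sgn_pm s * lamP s \<mu> * \<phi>$j)"

end

theory Submission
  imports Defs
begin

text \<open>For a symmetric L with L \<phi> = \<mu> \<phi>, the block vector (\<phi>; c \<phi>) is an eigenvector of
  G^T G = P^2 with eigenvalue c^2 as soon as c^2 = 1 + \<mu> c. The two roots of this quadratic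
  are \<lambda>+ and -\<lambda>-, and positive definiteness of P forces P to act on the vector by the
  positive square root \<lambda>+ resp. \<lambda>-. Since the product of the roots is -1, the two
  normalized vectors belonging to one \<phi>_i are orthogonal, so the 2n of them form an
  orthonormal eigenbasis of the symmetric matrix P, and P has no further eigenvalues.\<close>

lemma sum_UNIV_Plus:
  "(\<Sum>k\<in>(UNIV::('a::finite + 'b::finite) set). f k) = (\<Sum>j\<in>UNIV. f (Inl j)) + (\<Sum>j\<in>UNIV. f (Inr j))"
  using sum.Plus[of "UNIV::'a set" "UNIV::'b set" f] by (simp add: comp_def)

definition block_vec :: "real^'n \<Rightarrow> real^'n \<Rightarrow> real^('n+'n)" where
  "block_vec x y = (\<chi> k. case k of Inl j \<Rightarrow> x$j | Inr j \<Rightarrow> y$j)"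

lemma block_vec_nth [simp]: "block_vec x y $ Inl j = x$j" "block_vec x y $ Inr j = y$j"
  by (simp_all add: block_vec_def)

lemma block_vec_cases:
  obtains x y where "v = block_vec x y"
proof
  show "v = block_vec (\<chi> j. v $ Inl j) (\<chi> j. v $ Inr j)"
    by (auto simp: vec_eq_iff block_vec_def split: sum.splits)
qed

lemma block_vec_eq_0_iff [simp]: "block_vec x y = 0 \<longleftrightarrow> x = 0 \<and> y = 0"
  by (auto simp: vec_eq_iff block_vec_def split: sum.splits)

lemma scaleR_block_vec: "c *\<^sub>R block_vec x y = block_vec (c *\<^sub>R x) (c *\<^sub>R y)"
  by (auto simp: vec_eq_iff block_vec_def split: sum.splits)

lemma inner_block_vec: "block_vec x y \<bullet> block_vec x' y' = x \<bullet> x' + y \<bullet> y'"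
  by (simp add: inner_vec_def sum_UNIV_Plus)

lemma Gmat_mult_block_vec: "Gmat L *v block_vec x y = block_vec y (- x - L *v y)"
  unfolding vec_eq_iff
  by (rule allI, case_tac i)
    (simp_all add: Gmat_def matrix_vector_mult_def sum_UNIV_Plus sum_negf
      if_distrib[of "\<lambda>c. c * _"] cong: if_cong)

lemma transpose_Gmat_mult_block_vec:
  "transpose (Gmat L) *v block_vec x y = block_vec (- y) (x - transpose L *v y)"
  unfolding vec_eq_iff
  by (rule allI, case_tac i)
    (simp_all add: Gmat_def transpose_def matrix_vector_mult_def sum_UNIV_Plus sum_negf
      if_distrib[of "\<lambda>c. c * _"] cong: if_cong)

lemma transpose_Gmat_mult_Gmat_eigenvector:
  assumes "transpose L = L" and "L *v \<phi> = \<mu> *\<^sub>R \<phi>" and root: "c\<^sup>2 = 1 + \<mu> * c"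
  shows "(transpose (Gmat L) ** Gmat L) *v block_vec \<phi> (c *\<^sub>R \<phi>) = c\<^sup>2 *\<^sub>R block_vec \<phi> (c *\<^sub>R \<phi>)"
proof -
  have "(transpose (Gmat L) ** Gmat L) *v block_vec \<phi> (c *\<^sub>R \<phi>)
      = block_vec ((1 + \<mu> * c) *\<^sub>R \<phi>) ((c + \<mu> * (1 + \<mu> * c)) *\<^sub>R \<phi>)"
    unfolding matrix_vector_mul_assoc[symmetric] Gmat_mult_block_vec transpose_Gmat_mult_block_vec
    using assms(1,2)
    by (simp add: matrix_vector_mult_diff_distrib matrix_vector_mult_scaleR
        linear_neg[OF matrix_vector_mul_linear] algebra_simps)
  also have "\<dots> = c\<^sup>2 *\<^sub>R block_vec \<phi> (c *\<^sub>R \<phi>)"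
    using root by (simp add: scaleR_block_vec power2_eq_square algebra_simps)
  finally show ?thesis .
qed

lemma symmetric_matrix_inner_commute:
  fixes P :: "real^'m^'m"
  assumes "transpose P = P"
  shows "(P *v x) \<bullet> y = x \<bullet> (P *v y)"
  by (metis assms dot_lmul_matrix transpose_matrix_vector)

lemma pos_def_mat_sqrt_eigenvector:
  fixes P :: "real^'m^'m"
  assumes pd: "pos_def_mat P" and sq: "(P ** P) *v w = l\<^sup>2 *\<^sub>R w" and "l > 0"
  shows "P *v w = l *\<^sub>R w"
proof (rule ccontr)
  define u where "u = P *v w - l *\<^sub>R w"
  assume "P *v w \<noteq> l *\<^sub>R w"
  then have "u \<noteq> 0" by (simp add: u_def)
  have "P *v u = - l *\<^sub>R u"
    using sq by (simp add: u_def matrix_vector_mult_diff_distrib matrix_vector_mult_scaleR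
        matrix_vector_mul_assoc algebra_simps power2_eq_square)
  then have "u \<bullet> (P *v u) = - l * (u \<bullet> u)" by simp
  also have "\<dots> < 0" using \<open>u \<noteq> 0\<close> \<open>l > 0\<close> by simp
  finally show False using pd \<open>u \<noteq> 0\<close> unfolding pos_def_mat_def by fastforce
qed

lemma eigenvalues_of_complete_eigenfamily:
  fixes P :: "real^'m^'m" and w :: "'k \<Rightarrow> real^'m"
  assumes "transpose P = P"
    and eig: "\<And>k. P *v w k = ev k *\<^sub>R w k" and nonzero: "\<And>k. w k \<noteq> 0"
    and complete: "\<And>v. (\<And>k. v \<bullet> w k = 0) \<Longrightarrow> v = 0"
  shows "{c. \<exists>v. v \<noteq> 0 \<and> P *v v = c *\<^sub>R v} = range ev"
proof (intro equalityI subsetI)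
  fix c assume "c \<in> {c. \<exists>v. v \<noteq> 0 \<and> P *v v = c *\<^sub>R v}"
  then obtain v where "v \<noteq> 0" and Pv: "P *v v = c *\<^sub>R v" by blast
  have "c * (v \<bullet> w k) = ev k * (v \<bullet> w k)" for k
    using symmetric_matrix_inner_commute[OF assms(1), of v "w k"] by (simp add: Pv eig)
  then have "v \<bullet> w k = 0" if "c \<notin> range ev" for k
    using that by auto
  with complete \<open>v \<noteq> 0\<close> show "c \<in> range ev" by blast
qed (use eig nonzero in blast)

lemma orthonormal_family_complete:
  fixes \<phi> :: "'n::finite \<Rightarrow> real^'n"
  assumes on: "\<And>i j. \<phi> i \<bullet> \<phi> j = (if i = j then 1 else 0)"
    and "\<And>i. x \<bullet> \<phi> i = 0"
  shows "x = 0"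
proof -
  have "inj \<phi>"
    by (rule injI) (metis on zero_neq_one)
  have "independent (range \<phi>)"
  proof (rule pairwise_orthogonal_independent)
    show "pairwise orthogonal (range \<phi>)"
      unfolding pairwise_def orthogonal_def using on by auto
    show "0 \<notin> range \<phi>"
      using on by (metis image_iff inner_zero_left zero_neq_one)
  qed
  moreover have "card (range \<phi>) = dim (UNIV :: (real^'n) set)"
    using \<open>inj \<phi>\<close> by (simp add: card_image)
  ultimately have "x \<in> span (range \<phi>)"
    using card_ge_dim_independent[of "range \<phi>" UNIV] by auto
  then have "x \<bullet> x = 0"
    using orthogonal_to_span[of x "range \<phi>" x] assms(2) unfolding orthogonal_def by auto
  then show ?thesis by simp
qed

lemma laplacian_symmetric: "simple_adj A \<Longrightarrow> transpose (laplacian A) = laplacian A"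
  by (auto simp: simple_adj_def laplacian_def degree_mat_def vec_eq_iff transpose_def)

lemma lamP_pos: "lamP s \<mu> > 0"
proof -
  have "\<bar>\<mu>\<bar> < sqrt (\<mu>\<^sup>2 + 4)"
    by (metis real_sqrt_abs real_sqrt_less_iff less_add_same_cancel1 zero_less_numeral)
  then show ?thesis unfolding lamP_def sgn_pm_def by (auto simp: abs_less_iff)
qed

lemma lamP_True_mult_lamP_False: "lamP True \<mu> * lamP False \<mu> = 1"
  unfolding lamP_def sgn_pm_def by (simp add: field_simps power2_eq_square[symmetric])

definition signed_lamP :: "bool \<Rightarrow> real \<Rightarrow> real" where
  "signed_lamP s \<mu> = sgn_pm s * lamP s \<mu>"

lemma power2_signed_lamP: "(signed_lamP s \<mu>)\<^sup>2 = (lamP s \<mu>)\<^sup>2"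
  by (simp add: signed_lamP_def sgn_pm_def)

lemma signed_lamP_quadratic: "(signed_lamP s \<mu>)\<^sup>2 = 1 + \<mu> * signed_lamP s \<mu>"
proof -
  have "(sqrt (\<mu>\<^sup>2 + 4))\<^sup>2 = \<mu>\<^sup>2 + 4" by simp
  then show ?thesis
    unfolding signed_lamP_def lamP_def sgn_pm_def
    by (cases s) (simp_all add: power2_eq_square field_simps)
qed

lemma signed_lamP_mult_opposite: "s \<noteq> t \<Longrightarrow> signed_lamP s \<mu> * signed_lamP t \<mu> = -1"
  using lamP_True_mult_lamP_False[of \<mu>]
  by (cases s; cases t) (auto simp: signed_lamP_def sgn_pm_def algebra_simps)

lemma signed_lamP_True_minus_False: "signed_lamP True \<mu> - signed_lamP False \<mu> = sqrt (\<mu>\<^sup>2 + 4)"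
  by (simp add: signed_lamP_def lamP_def sgn_pm_def field_simps)

lemma psiP_eq_block_vec:
  "psiP s \<mu> \<phi> = (1 / sqrt (1 + (signed_lamP s \<mu>)\<^sup>2)) *\<^sub>R block_vec \<phi> (signed_lamP s \<mu> *\<^sub>R \<phi>)"
  by (auto simp: psiP_def block_vec_def signed_lamP_def power2_signed_lamP[unfolded signed_lamP_def]
      vec_eq_iff split: sum.splits)

lemma inner_psiP:
  "psiP s \<mu> \<phi> \<bullet> psiP t \<nu> \<psi> = (1 + signed_lamP s \<mu> * signed_lamP t \<nu>)
     / (sqrt (1 + (signed_lamP s \<mu>)\<^sup>2) * sqrt (1 + (signed_lamP t \<nu>)\<^sup>2)) * (\<phi> \<bullet> \<psi>)"
  by (simp add: psiP_eq_block_vec inner_block_vec add_divide_distrib algebra_simps)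

lemma psiP_orthonormal:
  assumes on: "\<And>i j. \<phi> i \<bullet> \<phi> j = (if i = j then 1 else 0)"
  shows "psiP s (\<mu> i) (\<phi> i) \<bullet> psiP t (\<mu> j) (\<phi> j) = (if (s, i) = (t, j) then 1 else 0)"
  using signed_lamP_mult_opposite[of s t "\<mu> i"]
  by (auto simp: inner_psiP on add_pos_nonneg[OF zero_less_one zero_le_power2, THEN less_imp_neq, symmetric]
      power2_eq_square[symmetric] real_sqrt_mult[symmetric])

lemma psiP_eigenvector:
  assumes "pos_def_mat P" and "P ** P = transpose (Gmat L) ** Gmat L"
    and "transpose L = L" and "L *v \<phi> = \<mu> *\<^sub>R \<phi>"
  shows "P *v psiP s \<mu> \<phi> = lamP s \<mu> *\<^sub>R psiP s \<mu> \<phi>"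
proof -
  let ?w = "block_vec \<phi> (signed_lamP s \<mu> *\<^sub>R \<phi>)"
  have "(P ** P) *v ?w = (lamP s \<mu>)\<^sup>2 *\<^sub>R ?w"
    unfolding assms(2) transpose_Gmat_mult_Gmat_eigenvector[OF assms(3,4) signed_lamP_quadratic]
    by (simp add: power2_signed_lamP)
  then have "P *v ?w = lamP s \<mu> *\<^sub>R ?w"
    using pos_def_mat_sqrt_eigenvector[OF assms(1) _ lamP_pos] by blast
  then show ?thesis
    by (simp add: psiP_eq_block_vec matrix_vector_mult_scaleR)
qed

lemma psiP_family_complete:
  fixes \<phi> :: "'n::finite \<Rightarrow> real^'n"
  assumes on: "\<And>i j. \<phi> i \<bullet> \<phi> j = (if i = j then 1 else 0)"
    and orth: "\<And>s i. v \<bullet> psiP s (\<mu> i) (\<phi> i) = 0"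
  shows "v = 0"
proof -
  obtain x y where v: "v = block_vec x y" by (rule block_vec_cases)
  have coord: "x \<bullet> \<phi> i + signed_lamP s (\<mu> i) * (y \<bullet> \<phi> i) = 0" for s i
    using orth[of s i] add_pos_nonneg[OF zero_less_one zero_le_power2, of "signed_lamP s (\<mu> i)"]
    by (simp add: v psiP_eq_block_vec inner_block_vec)
  have "x \<bullet> \<phi> i = 0 \<and> y \<bullet> \<phi> i = 0" for i
  proof -
    have "sqrt ((\<mu> i)\<^sup>2 + 4) * (y \<bullet> \<phi> i) = 0"
      unfolding signed_lamP_True_minus_False[symmetric] left_diff_distrib
      using coord[of i True] coord[of i False] by linarith
    then show ?thesis
      using coord[of i True] by (simp add: add_nonneg_eq_0_iff)
  qed
  then show ?thesis
    using orthonormal_family_complete[OF on] by (simp add: v)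
qed

theorem proposition5:
  fixes A :: "real^'n^'n"
    and \<phi> :: "'n \<Rightarrow> real^'n" and \<mu> :: "'n \<Rightarrow> real"
    and P :: "real^('n+'n)^('n+'n)"
  assumes "simple_adj A" and "adj_connected A"
    and "\<And>i j. \<phi> i \<bullet> \<phi> j = (if i = j then 1 else 0)"
    and "\<And>i. laplacian A *v \<phi> i = \<mu> i *\<^sub>R \<phi> i"
    and "pos_def_mat P"
    and "P ** P = transpose (Gmat (laplacian A)) ** Gmat (laplacian A)"
  shows "{c. \<exists>v. v \<noteq> 0 \<and> P *v v = c *\<^sub>R v} = {lamP s (\<mu> i) | s i. True}
    \<and> (\<forall>i. lamP True (\<mu> i) * lamP False (\<mu> i) = 1)
    \<and> (\<forall>s i. P *v psiP s (\<mu> i) (\<phi> i) = lamP s (\<mu> i) *\<^sub>R psiP s (\<mu> i) (\<phi> i))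
    \<and> (\<forall>s i. norm (psiP s (\<mu> i) (\<phi> i)) = 1)
    \<and> (\<forall>s i t j. (s, i) \<noteq> (t, j) \<longrightarrow> psiP s (\<mu> i) (\<phi> i) \<bullet> psiP t (\<mu> j) (\<phi> j) = 0)"
proof -
  have eig: "P *v psiP s (\<mu> i) (\<phi> i) = lamP s (\<mu> i) *\<^sub>R psiP s (\<mu> i) (\<phi> i)" for s i
    by (rule psiP_eigenvector[OF assms(5,6) laplacian_symmetric[OF assms(1)] assms(4)])
  have on: "psiP s (\<mu> i) (\<phi> i) \<bullet> psiP t (\<mu> j) (\<phi> j) = (if (s, i) = (t, j) then 1 else 0)"
    for s i t j
    by (rule psiP_orthonormal[OF assms(3)])
  then have norm: "norm (psiP s (\<mu> i) (\<phi> i)) = 1" for s i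
    by (simp add: norm_eq_1)
  define \<psi> where "\<psi> = (\<lambda>(s, i). psiP s (\<mu> i) (\<phi> i))"
  define ev where "ev = (\<lambda>(s, i). lamP s (\<mu> i))"
  have "{c. \<exists>v. v \<noteq> 0 \<and> P *v v = c *\<^sub>R v} = range ev"
  proof (rule eigenvalues_of_complete_eigenfamily)
    show "transpose P = P" using assms(5) by (simp add: pos_def_mat_def)
    show "v = 0" if "\<And>k. v \<bullet> \<psi> k = 0" for v
      using that[of "(_, _)"] by (intro psiP_family_complete[OF assms(3)]) (simp add: \<psi>_def)
    show "\<psi> k \<noteq> 0" for k
      using norm[of "fst k" "snd k"] by (cases k) (auto simp: \<psi>_def)
  qed (simp add: \<psi>_def ev_def eig split: prod.split)
  also have "\<dots> = {lamP s (\<mu> i) | s i. True}"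
    by (auto simp: ev_def)
  finally show ?thesis
    using eig norm on lamP_True_mult_lamP_False by auto
qed

end
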